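(* Assume $p$ is odd and $\ell\ge2$. An irreducible representation of ${\rm GL}_2(\mathfrak o_\ell)$ admits a $\theta$-Whittaker model for a (equivalently, any) non-degenerate character $\theta$ of $\mathbf U(\mathfrak o_\ell)$ if and only if it is primitive.
   Context: $\mathfrak o$: ring of integers of a non-archimedean local field, uniformizer $\varpi$, residue field $\mathbb F_q$ of characteristic $p$; $\mathfrak o_r=\mathfrak o/\varpi^r\mathfrak o$. $\mathbf U(\mathfrak o_\ell)=\{\begin{pmatrix}1&u\\0&1\end{pmatrix}\}$; a non-degenerate character is $\theta\begin{pmatrix}1&u\\0&1\end{pmatrix}=\varphi_1(u)$ with $\varphi_1$ a character of $(\mathfrak o_\ell,+)$ nontrivial on $\varpi^{\ell-1}\mathfrak o_\ell$. $\pi$ admits a $\theta$-Whittaker model if $\mathrm{Hom}(\pi,\mathrm{Ind}_{\mathbf U(\mathfrak o_\ell)}^{{\rm GL}_2(\mathfrak o_\ell)}\theta)\ne0$. Let $K_\ell^{\ell-1}=\ker({\rm GL}_2(\mathfrak o_\ell)\to{\rm GL}_2(\mathfrak o_{\ell-1}))=\{I+\varpi^{\ell-1}y\}$; fixing a primitive $\varphi$, each $x\in M_2(\mathbb F_q)$ gives a character $\varphi_x(I+\varpi^{\ell-1}y)=\varphi(\varpi^{\ell-1}\mathrm{tr}(\hat xy))$. An irreducible representation $\rho$ is primitive if the orbit of characters occurring in $\rho|_{K_\ell^{\ell-1}}$ contains no $\varphi_x$ with $x$ a scalar matrix. *)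

theory Defs
  imports "HOL-Analysis.Analysis" "HOL-Library.Numeral_Type"
begin

text \<open>The finite ring o_l = o / varpi^l o, abstractly: a finite commutative ring R with an
element varpi such that every element is a unit or divisible by varpi (local ring with
principal maximal ideal (varpi)), varpi^l = 0, varpi^(l-1) \<noteq> 0, and residue field
R/(varpi) of characteristic p (a prime with p = 0 in R/(varpi)).\<close>
definition trunc_dvr_ring :: "'r::{comm_ring_1,finite} \<Rightarrow> nat \<Rightarrow> nat \<Rightarrow> bool" where
  "trunc_dvr_ring w l p \<longleftrightarrow>
     (\<forall>a::'r. a dvd 1 \<or> w dvd a) \<and> w ^ l = 0 \<and> w ^ (l - 1) \<noteq> 0 \<and>
     prime p \<and> w dvd (of_nat p :: 'r)"

definition GL2 :: "(('r::comm_ring_1)^2^2) set" where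
  "GL2 = {A. \<exists>B. A ** B = mat 1 \<and> B ** A = mat 1}"

definition unip :: "'r::comm_ring_1 \<Rightarrow> 'r^2^2" where
  "unip u = vector [vector [1, u], vector [0, 1]]"

definition add_char :: "('r::comm_ring_1 \<Rightarrow> complex) \<Rightarrow> bool" where
  "add_char f \<longleftrightarrow> f 0 = 1 \<and> (\<forall>a b. f (a + b) = f a * f b)"

text \<open>An additive character nontrivial on varpi^(l-1) R (used both for non-degenerate
characters theta(unip u) = psi u of U, and for the fixed primitive character phi).\<close>
definition nondeg_char :: "'r::comm_ring_1 \<Rightarrow> nat \<Rightarrow> ('r \<Rightarrow> complex) \<Rightarrow> bool" where
  "nondeg_char w l f \<longleftrightarrow> add_char f \<and> (\<exists>a. f (w ^ (l - 1) * a) \<noteq> 1)"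

definition is_rep :: "('r::comm_ring_1^2^2 \<Rightarrow> complex^'n^'n) \<Rightarrow> bool" where
  "is_rep \<rho> \<longleftrightarrow> \<rho> (mat 1) = mat 1 \<and>
     (\<forall>g\<in>GL2. \<forall>h\<in>GL2. \<rho> (g ** h) = \<rho> g ** \<rho> h)"

definition csubspace :: "(complex^'n) set \<Rightarrow> bool" where
  "csubspace W \<longleftrightarrow> 0 \<in> W \<and> (\<forall>v\<in>W. \<forall>w\<in>W. v + w \<in> W) \<and> (\<forall>c. \<forall>v\<in>W. c *s v \<in> W)"

definition irreducible_rep :: "('r::comm_ring_1^2^2 \<Rightarrow> complex^'n^'n) \<Rightarrow> bool" where
  "irreducible_rep \<rho> \<longleftrightarrow> is_rep \<rho> \<and>
     (\<forall>W. csubspace W \<and> (\<forall>g\<in>GL2. \<forall>v\<in>W. \<rho> g *v v \<in> W) \<longrightarrow> W = {0} \<or> W = UNIV)"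

text \<open>theta-Whittaker model, theta(unip u) = psi u:
 Hom_G(rho, Ind_U^G theta) \<noteq> 0, where Ind_U^G theta = {f : G \<rightarrow> C | f(u g) = theta(u) f(g)}
 with G acting by right translation (g f)(x) = f(x g). A G-map is a complex-linear
 T : complex^'n \<rightarrow> Ind theta (functions are only relevant on GL2).\<close>
definition has_whittaker :: "('r::comm_ring_1^2^2 \<Rightarrow> complex^'n^'n) \<Rightarrow> ('r \<Rightarrow> complex) \<Rightarrow> bool" where
  "has_whittaker \<rho> \<psi> \<longleftrightarrow>
    (\<exists>T :: complex^'n \<Rightarrow> ('r^2^2 \<Rightarrow> complex).
       (\<forall>v w x. x \<in> GL2 \<longrightarrow> T (v + w) x = T v x + T w x) \<and>
       (\<forall>c v x. x \<in> GL2 \<longrightarrow> T (c *s v) x = c * T v x) \<and>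
       (\<forall>v u x. x \<in> GL2 \<longrightarrow> T v (unip u ** x) = \<psi> u * T v x) \<and>
       (\<forall>v g x. g \<in> GL2 \<longrightarrow> x \<in> GL2 \<longrightarrow> T (\<rho> g *v v) x = T v (x ** g)) \<and>
       (\<exists>v. \<exists>x\<in>GL2. T v x \<noteq> 0))"

definition Kl :: "'r::comm_ring_1 \<Rightarrow> nat \<Rightarrow> ('r^2^2) set" where
  "Kl w l = {mat 1 + mat (w ^ (l - 1)) ** y | y. True}"

definition occurs_in :: "('r::comm_ring_1^2^2 \<Rightarrow> complex^'n^'n) \<Rightarrow> 'r \<Rightarrow> nat \<Rightarrow> ('r^2^2 \<Rightarrow> complex) \<Rightarrow> bool" where
  "occurs_in \<rho> w l ch \<longleftrightarrow> (\<exists>v. v \<noteq> 0 \<and> (\<forall>k\<in>Kl w l. \<rho> k *v v = ch k *s v))"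

text \<open>The character chi agrees on K_l^{l-1} with phi_x, x given by a lift xh in M_2(R):
 phi_x(I + varpi^(l-1) y) = phi(varpi^(l-1) tr(xh y)).\<close>
definition is_phi_x :: "('r::comm_ring_1 \<Rightarrow> complex) \<Rightarrow> 'r \<Rightarrow> nat \<Rightarrow> 'r^2^2 \<Rightarrow> ('r^2^2 \<Rightarrow> complex) \<Rightarrow> bool" where
  "is_phi_x \<phi> w l xh ch \<longleftrightarrow>
     (\<forall>y. ch (mat 1 + mat (w ^ (l - 1)) ** y) = \<phi> (w ^ (l - 1) * trace (xh ** y)))"

text \<open>rho is primitive: the GL_2-orbit of the characters occurring in rho|K contains no
phi_x with x scalar. The conjugate of chi by g (with inverse h) is k \<mapsto> chi(g k h).
A scalar x in M_2(F_q) is the reduction of mat c for some c in R; phi_x only depends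
on the reduction of the lift.\<close>
definition primitive_rep :: "('r::comm_ring_1^2^2 \<Rightarrow> complex^'n^'n) \<Rightarrow> 'r \<Rightarrow> nat \<Rightarrow> ('r \<Rightarrow> complex) \<Rightarrow> bool" where
  "primitive_rep \<rho> w l \<phi> \<longleftrightarrow>
     \<not> (\<exists>ch g h c. occurs_in \<rho> w l ch \<and> g ** h = mat 1 \<and> h ** g = mat 1 \<and>
            is_phi_x \<phi> w l (mat c) (\<lambda>k. ch (g ** k ** h)))"

end

theory Submission
  imports Defs
begin

text \<open>The kernel \<open>K = {1 + \<pi>^(l-1) y}\<close> is abelian, and the scalar characters
  \<open>y \<mapsto> \<phi> (\<pi>^(l-1) c tr y)\<close> of \<open>K\<close> are invariant under conjugation. If such a character
  occurs in \<open>\<rho>\<close>, its eigenspace is a subrepresentation, so by irreducibility \<open>K\<close> acts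
  through it everywhere; then the traceless elements of \<open>K\<close>, among them \<open>unip (\<pi>^(l-1) a)\<close>,
  act trivially, which is incompatible with a Whittaker functional since \<open>\<theta>\<close> is nontrivial on
  them. Conversely, if some \<open>unip (\<pi>^(l-1) a)\<close> acts nontrivially, Fourier analysis on \<open>U\<close>
  gives an eigenvector for a character \<open>\<theta> (t * _)\<close> with \<open>t\<close> a unit, a diagonal twist makes it a
  \<open>\<theta>\<close>-eigenvector, and its matrix coefficients are a Whittaker model. If all of them act
  trivially, so does the traceless part of \<open>K\<close>, which they generate up to conjugation; then \<open>K\<close>
  acts through the trace, and Fourier analysis on the diagonal produces an occurring scalar
  character.\<close>

lemma mat_mult_nth: "(mat a ** (X::'a::comm_ring_1^'n^'m)) $ i $ j = a * X $ i $ j"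
  by (simp add: matrix_matrix_mult_def mat_def if_distrib if_distribR cong: if_cong)

lemma mat_commute: "(A::'a::comm_ring_1^'n^'n) ** mat a = mat a ** A"
  by (simp add: matrix_matrix_mult_def mat_def vec_eq_iff if_distrib if_distribR mult.commute
      cong: if_cong)

lemma matrix_add_rdistrib: "(B + C) ** A = B ** A + C ** A"
  by (vector matrix_matrix_mult_def sum.distrib[symmetric] field_simps)

lemma trace_mat_mult: "trace (mat c ** (y::'a::comm_ring_1^'n^'n)) = c * trace y"
  by (simp add: trace_def mat_mult_nth sum_distrib_left)

lemma trace_conj: "g ** h = mat 1 \<Longrightarrow> trace (h ** y ** g) = trace (y::'a::comm_ring_1^'n^'n)"
  by (metis matrix_mul_assoc matrix_mul_lid trace_mul_sym)

lemma vector_matrix_mul_eq_id: "(\<And>x. x v* A = x) \<Longrightarrow> A = (mat 1::'a::comm_ring_1^'n^'n)"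
  by (metis matrix_eq matrix_vector_mul_lid transpose_matrix_vector transpose_mat transpose_transpose)

lemma vector_matrix_sum_left:
  "finite S \<Longrightarrow> (\<Sum>i\<in>S. g i) v* (A::'a::comm_ring_1^'n^'m) = (\<Sum>i\<in>S. g i v* A)"
  by (induction S rule: finite_induct) (simp_all add: vector_matrix_left_distrib)

lemma GL2_I: "A ** B = mat 1 \<Longrightarrow> B ** A = mat 1 \<Longrightarrow> A \<in> GL2"
  unfolding GL2_def by blast

lemma GL2_mult: "g \<in> GL2 \<Longrightarrow> h \<in> GL2 \<Longrightarrow> g ** h \<in> GL2"
proof -
  assume "g \<in> GL2" "h \<in> GL2"
  then obtain g' h' where "g ** g' = mat 1" "g' ** g = mat 1" "h ** h' = mat 1" "h' ** h = mat 1"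
    unfolding GL2_def by blast
  then show ?thesis
    by (intro GL2_I[of _ "h' ** g'"])
      (simp_all add: matrix_mul_assoc, simp_all add: matrix_mul_assoc[symmetric])
qed

lemma GL2_one: "mat 1 \<in> GL2"
  by (rule GL2_I[of _ "mat 1"]) simp_all

lemma is_rep_one: "is_rep \<rho> \<Longrightarrow> \<rho> (mat 1) = mat 1"
  and is_rep_mult: "is_rep \<rho> \<Longrightarrow> g \<in> GL2 \<Longrightarrow> h \<in> GL2 \<Longrightarrow> \<rho> (g ** h) = \<rho> g ** \<rho> h"
  unfolding is_rep_def by blast+

definition kernel_elt :: "'r::comm_ring_1 \<Rightarrow> 'r^2^2 \<Rightarrow> 'r^2^2" where
  "kernel_elt e y = mat 1 + mat e ** y"

lemma Kl_eq_range_kernel_elt: "Kl w l = range (kernel_elt (w ^ (l - 1)))"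
  unfolding Kl_def kernel_elt_def by auto

lemma kernel_elt_mult:
  assumes "e * e = 0"
  shows "kernel_elt e X ** kernel_elt e Y = kernel_elt e (X + Y)"
proof -
  have "((mat e ** X) ** (mat e ** Y)) $ i $ j = 0" for i j
  proof -
    have "((mat e ** X) ** (mat e ** Y)) $ i $ j
        = (\<Sum>k\<in>UNIV. (mat e ** X) $ i $ k * (mat e ** Y) $ k $ j)"
      by (simp add: matrix_matrix_mult_def)
    also have "\<dots> = (\<Sum>k\<in>UNIV. (e * e) * (X $ i $ k * Y $ k $ j))"
      by (simp add: mat_mult_nth mult.assoc mult.left_commute)
    finally show ?thesis by (simp add: assms)
  qed
  then have "(mat e ** X) ** (mat e ** Y) = 0" by (simp add: vec_eq_iff)
  then show ?thesis
    unfolding kernel_elt_def matrix_add_ldistrib matrix_add_rdistrib by (simp add: add_ac)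
qed

lemma kernel_elt_zero: "kernel_elt e 0 = mat 1"
  by (simp add: kernel_elt_def)

lemma kernel_elt_GL2: "e * e = 0 \<Longrightarrow> kernel_elt e X \<in> GL2"
  by (rule GL2_I[of _ "kernel_elt e (- X)"]) (simp_all add: kernel_elt_mult kernel_elt_zero)

lemma kernel_elt_conj:
  assumes "g ** h = mat 1"
  shows "g ** kernel_elt e X ** h = kernel_elt e (g ** X ** h)"
proof -
  have "g ** (mat e ** X) = mat e ** (g ** X)"
    by (simp add: matrix_mul_assoc mat_commute)
  then show ?thesis
    unfolding kernel_elt_def matrix_add_ldistrib matrix_add_rdistrib
    by (simp add: assms matrix_mul_assoc[symmetric])
qed

lemma kernel_elt_mult_GL2_commute:
  assumes "x ** x' = mat 1" "x' ** x = mat 1"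
  shows "kernel_elt e y ** x = x ** kernel_elt e (x' ** y ** x)"
  using kernel_elt_conj[OF assms(2), of e y] assms(1) by (metis matrix_mul_assoc matrix_mul_lid)

definition E12 :: "'r::comm_ring_1 \<Rightarrow> 'r^2^2" where
  "E12 a = vector [vector [0, a], vector [0, 0]]"

definition E11 :: "'r::comm_ring_1 \<Rightarrow> 'r^2^2" where
  "E11 a = vector [vector [a, 0], vector [0, 0]]"

lemma trace_E12: "trace (E12 a) = 0"
  by (simp add: trace_def sum_2 E12_def)

lemma E11_add: "E11 (a + b) = E11 a + E11 b"
  by (simp add: E11_def vec_eq_iff forall_2)

lemma E11_zero: "E11 0 = 0"
  by (simp add: E11_def vec_eq_iff forall_2)

lemma unip_eq_kernel_elt: "unip (e * a) = kernel_elt e (E12 a)"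
  by (simp add: unip_def kernel_elt_def E12_def vec_eq_iff forall_2 mat_mult_nth)
     (simp add: mat_def)

lemma unip_add: "unip a ** unip b = unip (a + b)"
  by (simp add: unip_def vec_eq_iff forall_2 matrix_matrix_mult_def sum_2)

lemma unip_zero: "unip 0 = mat 1"
  by (simp add: unip_def vec_eq_iff forall_2 mat_def)

lemma unip_GL2: "unip a \<in> GL2"
  by (rule GL2_I[of _ "unip (-a)"]) (simp_all add: unip_add unip_zero)

lemma traceless_part_sum_conj_E12:
  fixes y :: "'r::comm_ring_1^2^2"
  obtains a b c s g g' where "s ** s = mat 1" "g ** g' = mat 1" "g' ** g = mat 1"
    "y - E11 (trace y) = E12 a + s ** E12 b ** s + g ** E12 c ** g'"
proof
  let ?s = "vector [vector [0, 1], vector [1, 0]] :: 'r^2^2"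
  let ?g = "vector [vector [1, 0], vector [-1, 1]] :: 'r^2^2"
  let ?g' = "vector [vector [1, 0], vector [1, 1]] :: 'r^2^2"
  show "?s ** ?s = mat 1" "?g ** ?g' = mat 1" "?g' ** ?g = mat 1"
    by (simp_all add: vec_eq_iff forall_2 matrix_matrix_mult_def sum_2 mat_def)
  show "y - E11 (trace y) = E12 (y$1$2 + y$2$2) + ?s ** E12 (y$2$1 - y$2$2) ** ?s
      + ?g ** E12 (- y$2$2) ** ?g'"
    by (simp add: vec_eq_iff forall_2 matrix_matrix_mult_def sum_2 E11_def E12_def trace_def)
qed

section \<open>Characters and Fourier analysis\<close>

lemma add_char_zero: "add_char f \<Longrightarrow> f 0 = 1"
  and add_char_add: "add_char f \<Longrightarrow> f (a + b) = f a * f b"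
  unfolding add_char_def by blast+

lemma sum_smult_vec: "(\<Sum>i\<in>S. c i *s (v::'a::comm_ring_1^'n)) = (\<Sum>i\<in>S. c i) *s v"
  by (simp add: vec_eq_iff sum_distrib_right)

text \<open>Fourier inversion on \<open>(R,+)\<close>; \<open>sum_zero\<close> is the orthogonality of the characters
  \<open>f (t * _)\<close>.\<close>
lemma additive_action_eigendecomposition:
  fixes act :: "'r::{comm_ring_1,finite} \<Rightarrow> complex^'n \<Rightarrow> complex^'n" and f :: "'r \<Rightarrow> complex"
  assumes sum_zero: "\<And>u. u \<noteq> 0 \<Longrightarrow> (\<Sum>t\<in>UNIV. f (t * u)) = 0"
    and f: "add_char f"
    and act_add: "\<And>a b v. act (a + b) v = act a (act b v)"
    and act_zero: "\<And>v. act 0 v = v"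
    and act_plus: "\<And>a v v'. act a (v + v') = act a v + act a v'"
    and act_scale: "\<And>a c v. act a (c *s v) = c *s act a v"
  obtains P where "\<And>t a. act a (P t) = f (t * a) *s P t"
    and "(\<Sum>t\<in>UNIV. P t) = of_nat CARD('r) *s x"
proof
  define P where "P = (\<lambda>t. \<Sum>u\<in>UNIV. f (- (t * u)) *s act u x)"
  have act_sum: "act a (\<Sum>i\<in>S. g i) = (\<Sum>i\<in>S. act a (g i))" if "finite S" for a S g
    using that act_scale[of a 0 0] by (induction S rule: finite_induct) (simp_all add: act_plus)
  show "act a (P t) = f (t * a) *s P t" for t a
  proof -
    have "act a (P t) = (\<Sum>u\<in>UNIV. f (- (t * u)) *s act (a + u) x)"
      unfolding P_def by (simp add: act_sum act_scale act_add)
    also have "\<dots> = (\<Sum>u\<in>UNIV. f (- (t * (u - a))) *s act u x)"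
      by (rule sum.reindex_bij_witness[of _ "\<lambda>u. u - a" "\<lambda>u. u + a"]) (auto simp: add.commute)
    also have "\<dots> = (\<Sum>u\<in>UNIV. f (t * a) *s (f (- (t * u)) *s act u x))"
    proof (rule sum.cong[OF refl])
      fix u
      have "f (- (t * (u - a))) = f (t * a) * f (- (t * u))"
        using add_char_add[OF f, of "t * a" "- (t * u)"] by (simp add: algebra_simps)
      then show "f (- (t * (u - a))) *s act u x = f (t * a) *s (f (- (t * u)) *s act u x)"
        by (simp add: vec_eq_iff)
    qed
    also have "\<dots> = f (t * a) *s P t"
      unfolding P_def by (simp add: vec_eq_iff sum_distrib_left mult.assoc)
    finally show ?thesis .
  qed
  have "(\<Sum>t\<in>UNIV. f (- (t * u))) *s act u x = (if u = 0 then of_nat CARD('r) *s x else 0)"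
    for u :: 'r
    using sum_zero[of "- u"] by (simp add: add_char_zero[OF f] act_zero)
  then show "(\<Sum>t\<in>UNIV. P t) = of_nat CARD('r) *s x"
    unfolding P_def by (subst sum.swap) (simp add: sum_smult_vec)
qed

lemma sum_nonzero_obtain:
  assumes "(\<Sum>t\<in>S. P t) \<noteq> (0::'a::comm_monoid_add)"
  obtains t where "t \<in> S" "P t \<noteq> 0"
  using assms by (meson sum.neutral)

lemma vec_nonzero_component: "v \<noteq> 0 \<Longrightarrow> \<exists>i. v $ i \<noteq> 0"
  by (simp add: vec_eq_iff)

section \<open>Truncated discrete valuation rings\<close>

lemma unit_mult_power_or_multiple:
  fixes w :: "'r::comm_ring_1"
  assumes "\<forall>a::'r. a dvd 1 \<or> w dvd a"
  shows "(\<exists>u k. k < n \<and> u dvd 1 \<and> a = u * w ^ k) \<or> (\<exists>b. a = w ^ n * b)"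
proof (induction n)
  case (Suc n)
  then show ?case
  proof
    assume "\<exists>b. a = w ^ n * b"
    then obtain b where b: "a = w ^ n * b" by blast
    show ?thesis
    proof (cases "b dvd 1")
      case True
      then show ?thesis using b by (metis lessI mult.commute)
    next
      case False
      then obtain b' where "b = w * b'" using assms by (meson dvdE)
      then show ?thesis using b by (metis mult.assoc power_Suc2)
    qed
  qed (blast intro: less_SucI)
qed auto

locale trunc_dvr =
  fixes w :: "'r::{comm_ring_1,finite}" and l p :: nat
  assumes trunc_dvr_ring: "trunc_dvr_ring w l p" and two_le_l: "l \<ge> 2"
begin

lemma local_ring: "a dvd 1 \<or> w dvd a" and power_l: "w ^ l = 0"
  using trunc_dvr_ring unfolding trunc_dvr_ring_def by auto

lemma socle_square: "w ^ (l - 1) * w ^ (l - 1) = 0"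
proof -
  have "l - 1 + (l - 1) = l + (l - 2)" using two_le_l by arith
  then have "w ^ (l - 1) * w ^ (l - 1) = w ^ l * w ^ (l - 2)"
    by (metis power_add)
  then show ?thesis by (simp add: power_l)
qed

lemma socle_mult_uniformizer: "w ^ (l - 1) * w = 0"
  using two_le_l power_l by (metis Suc_diff_1 not_numeral_le_zero not_gr_zero power_Suc2 le_0_eq)

lemma nonzero_eq_unit_mult_power:
  assumes "a \<noteq> 0"
  obtains u k where "k < l" "u dvd 1" "a = u * w ^ k"
  using unit_mult_power_or_multiple[of w l a] local_ring assms power_l by auto

lemma nondeg_char_nontrivial_on_multiples:
  assumes "nondeg_char w l f" "u \<noteq> 0"
  obtains t where "f (t * u) \<noteq> 1"
proof -
  obtain a where a: "f (w ^ (l - 1) * a) \<noteq> 1" using assms(1) unfolding nondeg_char_def by blast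
  obtain v k where vk: "k < l" "v dvd 1" "u = v * w ^ k"
    using nonzero_eq_unit_mult_power[OF assms(2)] .
  obtain v' where v': "1 = v * v'" using vk(2) by (meson dvdE)
  have "(v' * w ^ (l - 1 - k) * a) * u = (v * v') * (w ^ (l - 1 - k) * w ^ k) * a"
    by (simp add: vk(3) algebra_simps)
  also have "\<dots> = w ^ (l - 1) * a"
    using vk(1) v' by (simp add: power_add[symmetric])
  finally show ?thesis using a that by metis
qed

lemma nondeg_char_sum_multiples:
  assumes "nondeg_char w l f" "u \<noteq> 0"
  shows "(\<Sum>t\<in>UNIV. f (t * u)) = 0"
proof -
  obtain t0 where t0: "f (t0 * u) \<noteq> 1" using nondeg_char_nontrivial_on_multiples[OF assms] .
  have f: "add_char f" using assms(1) unfolding nondeg_char_def by blast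
  have "(\<Sum>t\<in>UNIV. f (t * u)) = (\<Sum>t\<in>UNIV. f ((t + t0) * u))"
    by (rule sum.reindex_bij_witness[of _ "\<lambda>t. t + t0" "\<lambda>t. t - t0"]) auto
  also have "\<dots> = f (t0 * u) * (\<Sum>t\<in>UNIV. f (t * u))"
  proof -
    have "f ((t + t0) * u) = f (t0 * u) * f (t * u)" for t
      using add_char_add[OF f] by (metis distrib_right mult.commute)
    then show ?thesis by (simp add: sum_distrib_left)
  qed
  finally show ?thesis using t0 by (metis mult_cancel_right1 mult.commute)
qed

lemma unit_if_char_nontrivial_on_socle:
  assumes "add_char f" "f (t * (w ^ (l - 1) * a)) \<noteq> 1"
  shows "t dvd 1"
proof (rule ccontr)
  assume "\<not> t dvd 1"
  then obtain s where "t = w * s" using local_ring by (meson dvdE)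
  then have "t * (w ^ (l - 1) * a) = 0"
    using socle_mult_uniformizer by (simp add: algebra_simps)
  then show False using assms add_char_zero[OF assms(1)] by simp
qed

lemma in_socle_if_char_trivial_on_maximal_ideal:
  assumes "nondeg_char w l f" "\<And>r. f (t * (w * r)) = 1"
  obtains c where "t = w ^ (l - 1) * c"
proof (cases "t = 0")
  case True
  then show ?thesis using that[of 0] by simp
next
  case False
  obtain a where a: "f (w ^ (l - 1) * a) \<noteq> 1" using assms(1) unfolding nondeg_char_def by blast
  obtain v k where vk: "k < l" "v dvd 1" "t = v * w ^ k"
    using nonzero_eq_unit_mult_power[OF False] .
  obtain v' where v': "1 = v * v'" using vk(2) by (meson dvdE)
  show ?thesis
  proof (cases "k = l - 1")
    case True
    then show ?thesis using vk that by (auto simp: mult.commute)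
  next
    case False
    then have kl: "k + 1 + (l - 2 - k) = l - 1" using vk(1) by auto
    have "t * (w * (v' * w ^ (l - 2 - k) * a)) = (v * v') * (w ^ k * w * w ^ (l - 2 - k)) * a"
      by (simp add: vk(3) algebra_simps)
    also have "\<dots> = w ^ (l - 1) * a"
      using v' kl by (metis mult_1 power_Suc2 power_add Suc_eq_plus1)
    finally show ?thesis using a assms(2) by metis
  qed
qed

end

section \<open>Whittaker models and primitivity\<close>

text \<open>A character \<open>\<phi>_x\<close> with scalar \<open>x\<close> is invariant under conjugation.\<close>
lemma not_primitive_iff_scalar_character:
  "\<not> primitive_rep \<rho> w l \<phi> \<longleftrightarrow>
    (\<exists>v c. v \<noteq> 0 \<and>
      (\<forall>y. \<rho> (kernel_elt (w ^ (l - 1)) y) *v v = \<phi> (w ^ (l - 1) * (c * trace y)) *s v))"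
  (is "_ \<longleftrightarrow> (\<exists>v c. ?eigen v c)")
proof
  assume "\<not> primitive_rep \<rho> w l \<phi>"
  then obtain ch g h c where occ: "occurs_in \<rho> w l ch" and gh: "g ** h = mat 1" "h ** g = mat 1"
    and phi_x: "is_phi_x \<phi> w l (mat c) (\<lambda>k. ch (g ** k ** h))"
    unfolding primitive_rep_def by blast
  have ch: "ch (kernel_elt (w ^ (l - 1)) y) = \<phi> (w ^ (l - 1) * (c * trace y))" for y
  proof -
    have "g ** (h ** y ** g) ** h = y"
      using gh by (metis matrix_mul_assoc matrix_mul_lid matrix_mul_rid)
    then have "kernel_elt (w ^ (l - 1)) y = g ** kernel_elt (w ^ (l - 1)) (h ** y ** g) ** h"
      using kernel_elt_conj[OF gh(1)] by simp
    then show ?thesis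
      using phi_x trace_conj[OF gh(1), of y]
      unfolding is_phi_x_def kernel_elt_def by (metis trace_mat_mult)
  qed
  obtain v where "v \<noteq> 0" "\<forall>k\<in>Kl w l. \<rho> k *v v = ch k *s v"
    using occ unfolding occurs_in_def by blast
  then have "?eigen v c" using ch by (auto simp: Kl_eq_range_kernel_elt)
  then show "\<exists>v c. ?eigen v c" by blast
next
  assume "\<exists>v c. ?eigen v c"
  then obtain v c where v: "v \<noteq> 0" and eig: "\<forall>y. \<rho> (kernel_elt (w ^ (l - 1)) y) *v v
      = \<phi> (w ^ (l - 1) * (c * trace y)) *s v" by blast
  obtain i where i: "v $ i \<noteq> 0" using vec_nonzero_component[OF v] by blast
  define ch where "ch = (\<lambda>k. (\<rho> k *v v) $ i / v $ i)"
  have "occurs_in \<rho> w l ch"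
    unfolding occurs_in_def Kl_eq_range_kernel_elt ch_def using v eig i by auto
  moreover have "is_phi_x \<phi> w l (mat c) (\<lambda>k. ch (mat 1 ** k ** mat 1))"
    unfolding is_phi_x_def ch_def using eig i
    by (simp add: kernel_elt_def trace_mat_mult mult.assoc)
  ultimately show "\<not> primitive_rep \<rho> w l \<phi>"
    unfolding primitive_rep_def by (metis matrix_mul_lid)
qed

text \<open>The eigenspace of a conjugation-invariant character of the kernel is a subrepresentation.\<close>
lemma irreducible_scalar_on_kernel:
  assumes irr: "irreducible_rep \<rho>" and e: "e * e = 0" and v: "v \<noteq> 0"
    and eig: "\<And>y. \<rho> (kernel_elt e y) *v v = \<Phi> (trace y) *s v"
  shows "\<rho> (kernel_elt e y) = mat (\<Phi> (trace y))"
proof -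
  have rep: "is_rep \<rho>" using irr unfolding irreducible_rep_def by blast
  define E where "E = {u. \<forall>y. \<rho> (kernel_elt e y) *v u = \<Phi> (trace y) *s u}"
  have "csubspace E"
    unfolding csubspace_def E_def
    by (auto simp: matrix_vector_right_distrib vector_scalar_commute vec_eq_iff algebra_simps)
  moreover have "\<rho> x *v u \<in> E" if x: "x \<in> GL2" and u: "u \<in> E" for x u
  proof -
    obtain x' where x': "x ** x' = mat 1" "x' ** x = mat 1" using x unfolding GL2_def by blast
    have "\<rho> (kernel_elt e y) *v (\<rho> x *v u) = \<rho> x *v (\<rho> (kernel_elt e (x' ** y ** x)) *v u)" for y
      using kernel_elt_mult_GL2_commute[OF x', of e y] x kernel_elt_GL2[OF e]
      by (simp add: matrix_vector_mul_assoc is_rep_mult[OF rep, symmetric])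
    then show ?thesis
      using u trace_conj[OF x'(1)] unfolding E_def by (simp add: vector_scalar_commute)
  qed
  ultimately have "E = {0} \<or> E = UNIV" using irr unfolding irreducible_rep_def by blast
  moreover have "v \<in> E" using eig unfolding E_def by blast
  ultimately have "E = UNIV" using v by blast
  then show ?thesis
    unfolding E_def by (auto simp: matrix_eq vec_eq_iff matrix_vector_mult_def mat_def
        if_distrib if_distribR cong: if_cong)
qed

text \<open>Conjugated by \<open>x\<close>, \<open>unip (e * a)\<close> becomes a traceless element of the kernel, so
  \<open>T v x\<close> is multiplied both by \<open>\<psi> (e * a) \<noteq> 1\<close> and by \<open>1\<close>.\<close>
lemma not_has_whittaker_if_trivial_on_traceless:
  assumes e: "e * e = 0" and a: "\<psi> (e * a) \<noteq> 1"
    and triv: "\<And>y. trace y = 0 \<Longrightarrow> \<rho> (kernel_elt e y) = mat 1"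
  shows "\<not> has_whittaker \<rho> \<psi>"
proof
  assume "has_whittaker \<rho> \<psi>"
  then obtain T where
    unip: "\<And>v u x. x \<in> GL2 \<Longrightarrow> T v (unip u ** x) = \<psi> u * T v x"
    and equiv: "\<And>v g x. g \<in> GL2 \<Longrightarrow> x \<in> GL2 \<Longrightarrow> T (\<rho> g *v v) x = T v (x ** g)"
    and nonzero: "\<exists>v. \<exists>x\<in>GL2. T v x \<noteq> 0"
    unfolding has_whittaker_def by blast
  obtain v x where x: "x \<in> GL2" and Tvx: "T v x \<noteq> 0" using nonzero by blast
  obtain x' where x': "x ** x' = mat 1" "x' ** x = mat 1" using x unfolding GL2_def by blast
  let ?k = "kernel_elt e (x' ** E12 a ** x)"
  have "unip (e * a) ** x = x ** ?k"
    using kernel_elt_mult_GL2_commute[OF x'] by (simp add: unip_eq_kernel_elt)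
  then have "\<psi> (e * a) * T v x = T v (x ** ?k)"
    using unip[OF x] by metis
  also have "\<dots> = T (\<rho> ?k *v v) x"
    using equiv[OF kernel_elt_GL2[OF e] x] by simp
  also have "\<dots> = T v x"
    using triv[of "x' ** E12 a ** x"] by (simp add: trace_conj[OF x'(1)] trace_E12)
  finally show False using a Tvx by simp
qed

text \<open>The matrix coefficients \<open>x \<mapsto> v \<rho>(x) v'\<close> of a \<open>\<psi>\<close>-eigenvector \<open>v\<close> of \<open>U\<close>.\<close>
lemma has_whittaker_of_row_eigenvector:
  fixes \<rho> :: "'r::comm_ring_1^2^2 \<Rightarrow> complex^'n^'n"
  assumes rep: "is_rep \<rho>" and v: "v \<noteq> 0"
    and eig: "\<And>u. v v* \<rho> (unip u) = \<psi> u *s v"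
  shows "has_whittaker \<rho> \<psi>"
proof -
  obtain i where i: "v $ i \<noteq> 0" using vec_nonzero_component[OF v] by blast
  define T where "T = (\<lambda>v' x. \<Sum>j\<in>UNIV. (v v* \<rho> x) $ j * (v' :: complex^'n) $ j)"
  have "T v' (unip u ** x) = \<psi> u * T v' x" if "x \<in> GL2" for v' u x
    unfolding T_def using that
    by (simp add: is_rep_mult[OF rep] unip_GL2 vector_matrix_mul_assoc[symmetric] eig
        scalar_vector_matrix_assoc sum_distrib_left mult_ac)
  moreover have "T (\<rho> g *v v') x = T v' (x ** g)" if "g \<in> GL2" "x \<in> GL2" for v' g x
  proof -
    have "(\<Sum>j\<in>UNIV. a $ j * (A *v b) $ j) = (\<Sum>j\<in>UNIV. (a v* A) $ j * b $ j)"
      for a b :: "complex^'n" and A :: "complex^'n^'n"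
      by (simp add: matrix_vector_mult_def vector_matrix_mult_def sum_distrib_left
          sum_distrib_right mult_ac) (rule sum.swap)
    then show ?thesis
      unfolding T_def using that by (simp add: is_rep_mult[OF rep] vector_matrix_mul_assoc)
  qed
  moreover have "T (axis i 1) (mat 1) \<noteq> 0"
    unfolding T_def using i
    by (simp add: is_rep_one[OF rep] axis_def if_distrib if_distribR cong: if_cong)
  ultimately show ?thesis
    unfolding has_whittaker_def using GL2_one
    by (intro exI[of _ T] conjI allI impI; (simp add: T_def distrib_left sum.distrib
        sum_distrib_left mult_ac)?; blast)
qed

text \<open>Twisting by \<open>diag(s, 1)\<close> turns the character \<open>\<psi> (t * _)\<close> of \<open>U\<close> into \<open>\<psi>\<close>.\<close>
lemma row_eigenvector_unit_twist:
  assumes rep: "is_rep \<rho>" and ts: "t * s = 1" and v: "v \<noteq> 0"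
    and eig: "\<And>u. v v* \<rho> (unip u) = \<psi> (t * u) *s v"
  obtains v' where "v' \<noteq> 0" "\<And>u. v' v* \<rho> (unip u) = \<psi> u *s v'"
proof
  define d where "d = (vector [vector [s, 0], vector [0, 1]] :: 'a^2^2)"
  define d' where "d' = (vector [vector [t, 0], vector [0, 1]] :: 'a^2^2)"
  have dd': "d ** d' = mat 1" "d' ** d = mat 1"
    using ts by (simp_all add: d_def d'_def vec_eq_iff forall_2 matrix_matrix_mult_def sum_2
        mat_def mult.commute)
  then have GL: "d \<in> GL2" "d' \<in> GL2" using GL2_I by blast+
  have d_unip: "d ** unip u = unip (s * u) ** d" for u
    by (simp add: d_def unip_def vec_eq_iff forall_2 matrix_matrix_mult_def sum_2)
  show "(v v* \<rho> d) v* \<rho> (unip u) = \<psi> u *s (v v* \<rho> d)" for u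
  proof -
    have "(v v* \<rho> d) v* \<rho> (unip u) = v v* \<rho> (unip (s * u) ** d)"
      by (simp add: vector_matrix_mul_assoc is_rep_mult[OF rep] GL unip_GL2 d_unip[symmetric])
    also have "\<dots> = (\<psi> (t * (s * u)) *s v) v* \<rho> d"
      using eig by (simp add: vector_matrix_mul_assoc[symmetric] is_rep_mult[OF rep] GL unip_GL2)
    finally show ?thesis
      using ts by (simp add: scalar_vector_matrix_assoc mult.assoc[symmetric])
  qed
  have "(v v* \<rho> d) v* \<rho> d' = v"
    by (simp add: vector_matrix_mul_assoc is_rep_mult[OF rep, symmetric] GL dd' is_rep_one[OF rep])
  then show "v v* \<rho> d \<noteq> 0" using v by auto
qed

text \<open>The conjugates of the \<open>unip (e * b)\<close> generate the traceless part of the kernel.\<close>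
lemma kernel_elt_factors_through_trace:
  assumes rep: "is_rep \<rho>" and e: "e * e = 0"
    and triv: "\<And>a. \<rho> (unip (e * a)) = mat 1"
  shows "\<rho> (kernel_elt e y) = \<rho> (kernel_elt e (E11 (trace y)))"
proof -
  have conj: "\<rho> (kernel_elt e (g ** E12 b ** g')) = mat 1"
    if "g ** g' = mat 1" "g' ** g = mat 1" for g g' b
  proof -
    have GL: "g \<in> GL2" "g' \<in> GL2" using that GL2_I by blast+
    have "kernel_elt e (g ** E12 b ** g') = g ** unip (e * b) ** g'"
      using kernel_elt_conj[OF that(1), of e "E12 b"] by (simp add: unip_eq_kernel_elt)
    then have "\<rho> (kernel_elt e (g ** E12 b ** g')) = \<rho> g ** \<rho> (unip (e * b)) ** \<rho> g'"
      by (simp add: is_rep_mult[OF rep] GL GL2_mult unip_GL2)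
    then show ?thesis
      using triv that is_rep_mult[OF rep GL] is_rep_one[OF rep] by simp
  qed
  obtain a b c s g g' where sg: "s ** s = mat 1" "g ** g' = mat 1" "g' ** g = mat 1"
    and decomp: "y - E11 (trace y) = E12 a + s ** E12 b ** s + g ** E12 c ** g'"
    using traceless_part_sum_conj_E12 .
  have "\<rho> (kernel_elt e (y - E11 (trace y))) = mat 1"
    using triv[of a] conj[OF sg(1) sg(1)] conj[OF sg(2,3)]
    by (simp add: decomp kernel_elt_mult[OF e, symmetric] is_rep_mult[OF rep] kernel_elt_GL2[OF e]
        GL2_mult unip_eq_kernel_elt)
  moreover have "kernel_elt e y = kernel_elt e (y - E11 (trace y)) ** kernel_elt e (E11 (trace y))"
    by (simp add: kernel_elt_mult[OF e])
  ultimately show ?thesis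
    by (simp add: is_rep_mult[OF rep] kernel_elt_GL2[OF e])
qed

context trunc_dvr
begin

text \<open>Decompose \<open>x\<close> under \<open>U\<close>; a component \<open>P t\<close> moved by \<open>unip (w^(l-1) * a)\<close> has
  \<open>\<psi> (t * w^(l-1) * a) \<noteq> 1\<close>, which forces \<open>t\<close> to be a unit.\<close>
lemma psi_eigenvector_of_nontrivial_socle_unip:
  assumes rep: "is_rep \<rho>" and \<psi>: "nondeg_char w l \<psi>"
    and nontriv: "x v* \<rho> (unip (w ^ (l - 1) * a)) \<noteq> x"
  obtains v where "v \<noteq> 0" "\<And>u. v v* \<rho> (unip u) = \<psi> u *s v"
proof -
  let ?e = "w ^ (l - 1)" and ?act = "\<lambda>a v. v v* \<rho> (unip a)"
  have f: "add_char \<psi>" using \<psi> unfolding nondeg_char_def by blast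
  have act_add: "?act (a + b) v = ?act a (?act b v)" for a b v
    using unip_add[of b a] is_rep_mult[OF rep unip_GL2 unip_GL2, of b a]
    by (simp add: add.commute vector_matrix_mul_assoc)
  have act_zero: "?act 0 v = v" for v by (simp add: unip_zero is_rep_one[OF rep])
  obtain P where P: "\<And>t a. ?act a (P t) = \<psi> (t * a) *s P t"
    and sum_P: "(\<Sum>t\<in>UNIV. P t) = of_nat CARD('r) *s x"
    using additive_action_eigendecomposition[OF nondeg_char_sum_multiples[OF \<psi>] f act_add act_zero
        vector_matrix_left_distrib scalar_vector_matrix_assoc] by blast
  have "(\<Sum>t\<in>UNIV. (\<psi> (t * (?e * a)) - 1) *s P t)
      = (\<Sum>t\<in>UNIV. P t) v* \<rho> (unip (?e * a)) - (\<Sum>t\<in>UNIV. P t)"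
    using P by (simp add: vector_matrix_sum_left sum_subtractf vec_eq_iff algebra_simps)
  also have "\<dots> = of_nat CARD('r) *s (x v* \<rho> (unip (?e * a)) - x)"
    unfolding sum_P by (simp add: scalar_vector_matrix_assoc vec_eq_iff algebra_simps)
  also have "\<dots> \<noteq> 0" using nontriv by (simp add: vec_eq_iff)
  finally obtain t where t: "(\<psi> (t * (?e * a)) - 1) *s P t \<noteq> 0"
    by (rule sum_nonzero_obtain)
  then have "\<psi> (t * (?e * a)) \<noteq> 1" by auto
  then have "t dvd 1" by (rule unit_if_char_nontrivial_on_socle[OF f])
  then obtain s where "t * s = 1" by (metis dvdE)
  moreover have "P t \<noteq> 0" using t by auto
  ultimately show ?thesis
    using row_eigenvector_unit_twist[OF rep] P that by blast
qed

text \<open>Decompose under the action \<open>a \<mapsto> \<rho> (kernel_elt (w^(l-1)) (E11 a))\<close> of \<open>(R,+)\<close>: a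
  \<open>\<phi> (t * _)\<close>-component is fixed by the trivial elements with \<open>a \<in> (w)\<close>, so \<open>t\<close> lies in the
  socle \<open>(w^(l-1))\<close>.\<close>
lemma scalar_character_of_factoring_through_trace:
  fixes \<rho> :: "'r^2^2 \<Rightarrow> complex^'n^'n"
  assumes rep: "is_rep \<rho>" and \<phi>: "nondeg_char w l \<phi>"
    and factors: "\<And>y. \<rho> (kernel_elt (w ^ (l - 1)) y) = \<rho> (kernel_elt (w ^ (l - 1)) (E11 (trace y)))"
  obtains v c where "v \<noteq> 0"
    "\<And>y. \<rho> (kernel_elt (w ^ (l - 1)) y) *v v = \<phi> (w ^ (l - 1) * (c * trace y)) *s v"
proof -
  let ?e = "w ^ (l - 1)"
  let ?act = "\<lambda>a v. \<rho> (kernel_elt ?e (E11 a)) *v v"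
  have f: "add_char \<phi>" using \<phi> unfolding nondeg_char_def by blast
  have act_add: "?act (a + b) v = ?act a (?act b v)" for a b v
  proof -
    have "kernel_elt ?e (E11 (a + b)) = kernel_elt ?e (E11 a) ** kernel_elt ?e (E11 b)"
      by (simp only: E11_add kernel_elt_mult[OF socle_square])
    then show ?thesis
      by (simp only: is_rep_mult[OF rep kernel_elt_GL2[OF socle_square] kernel_elt_GL2[OF socle_square]]
          matrix_vector_mul_assoc)
  qed
  have act_zero: "?act 0 v = v" for v
    by (simp add: E11_zero kernel_elt_zero is_rep_one[OF rep])
  obtain P where P: "\<And>t a. ?act a (P t) = \<phi> (t * a) *s P t"
    and sum_P: "(\<Sum>t\<in>UNIV. P t) = of_nat CARD('r) *s (1 :: complex^'n)"
    using additive_action_eigendecomposition[OF nondeg_char_sum_multiples[OF \<phi>] f act_add act_zero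
        matrix_vector_right_distrib vector_scalar_commute] by blast
  have "(\<Sum>t\<in>UNIV. P t) \<noteq> 0" unfolding sum_P by (simp add: vec_eq_iff)
  then obtain t where Pt: "P t \<noteq> 0" by (rule sum_nonzero_obtain)
  then obtain i where i: "P t $ i \<noteq> 0" using vec_nonzero_component by blast
  have "\<phi> (t * (w * r)) = 1" for r
  proof -
    have "mat ?e ** E11 (w * r) = 0"
      using socle_mult_uniformizer
      by (simp add: vec_eq_iff forall_2 mat_mult_nth E11_def mult.assoc[symmetric])
    then have "?act (w * r) (P t) = P t" by (simp add: kernel_elt_def is_rep_one[OF rep])
    then have "\<phi> (t * (w * r)) *s P t = P t" by (simp only: P)
    then have "(\<phi> (t * (w * r)) *s P t) $ i = P t $ i" by simp
    then show ?thesis using i by simp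
  qed
  then obtain c where c: "t = ?e * c"
    using in_socle_if_char_trivial_on_maximal_ideal[OF \<phi>] by blast
  show ?thesis
  proof (rule that[OF Pt])
    fix y
    have "\<rho> (kernel_elt ?e y) *v P t = ?act (trace y) (P t)"
      using factors[of y] by (simp only:)
    also have "\<dots> = \<phi> (?e * (c * trace y)) *s P t"
      using P c by (simp add: mult.assoc)
    finally show "\<rho> (kernel_elt ?e y) *v P t = \<phi> (?e * (c * trace y)) *s P t" .
  qed
qed

lemma primitive_if_has_whittaker:
  assumes irr: "irreducible_rep \<rho>" and \<phi>: "add_char \<phi>" and \<psi>: "nondeg_char w l \<psi>"
    and wh: "has_whittaker \<rho> \<psi>"
  shows "primitive_rep \<rho> w l \<phi>"
proof (rule ccontr)
  let ?e = "w ^ (l - 1)"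
  assume "\<not> primitive_rep \<rho> w l \<phi>"
  then obtain v c where "v \<noteq> 0" "\<And>y. \<rho> (kernel_elt ?e y) *v v = \<phi> (?e * (c * trace y)) *s v"
    unfolding not_primitive_iff_scalar_character by blast
  then have scalar: "\<rho> (kernel_elt ?e y) = mat (\<phi> (?e * (c * trace y)))" for y
    by (rule irreducible_scalar_on_kernel[OF irr socle_square])
  have "\<rho> (kernel_elt ?e y) = mat 1" if "trace y = 0" for y
    using scalar[of y] that add_char_zero[OF \<phi>] by simp
  moreover obtain a where "\<psi> (?e * a) \<noteq> 1" using \<psi> unfolding nondeg_char_def by blast
  ultimately show False using not_has_whittaker_if_trivial_on_traceless[OF socle_square] wh by blast
qed

lemma has_whittaker_if_primitive:
  assumes rep: "is_rep \<rho>" and \<phi>: "nondeg_char w l \<phi>" and \<psi>: "nondeg_char w l \<psi>"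
    and prim: "primitive_rep \<rho> w l \<phi>"
  shows "has_whittaker \<rho> \<psi>"
proof (cases "\<forall>a. \<rho> (unip (w ^ (l - 1) * a)) = mat 1")
  case True
  have "\<rho> (kernel_elt (w ^ (l - 1)) y) = \<rho> (kernel_elt (w ^ (l - 1)) (E11 (trace y)))" for y
    using kernel_elt_factors_through_trace[OF rep socle_square] True by blast
  then have "\<not> primitive_rep \<rho> w l \<phi>"
    using scalar_character_of_factoring_through_trace[OF rep \<phi>]
    unfolding not_primitive_iff_scalar_character by blast
  then show ?thesis using prim by contradiction
next
  case False
  then obtain a x where "x v* \<rho> (unip (w ^ (l - 1) * a)) \<noteq> x"
    using vector_matrix_mul_eq_id by blast
  then obtain v where "v \<noteq> 0" "\<And>u. v v* \<rho> (unip u) = \<psi> u *s v"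
    using psi_eigenvector_of_nontrivial_socle_unip[OF rep \<psi>] by blast
  then show ?thesis by (rule has_whittaker_of_row_eigenvector[OF rep])
qed

end

theorem theorem5p2:
  fixes w :: "'r::{comm_ring_1,finite}" and l p :: nat
    and \<rho> :: "'r^2^2 \<Rightarrow> complex^'n^'n"
    and \<phi> \<psi> :: "'r \<Rightarrow> complex"
  assumes "trunc_dvr_ring w l p"
    and "odd p"
    and "l \<ge> 2"
    and "nondeg_char w l \<phi>"
    and "irreducible_rep \<rho>"
    and "nondeg_char w l \<psi>"
  shows "has_whittaker \<rho> \<psi> \<longleftrightarrow> primitive_rep \<rho> w l \<phi>"
proof -
  interpret trunc_dvr w l p using assms(1,3) by unfold_locales
  have "is_rep \<rho>" using assms(5) unfolding irreducible_rep_def by blast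
  moreover have "add_char \<phi>" using assms(4) unfolding nondeg_char_def by blast
  ultimately show ?thesis
    using primitive_if_has_whittaker[OF assms(5) _ assms(6)]
      has_whittaker_if_primitive[OF _ assms(4) assms(6)] by blast
qed

end
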